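(* Let $X$ be a shift space and $N\ge0$. The following are equivalent: (1) the extension graph $\mathcal{E}_X(v)$ is acyclic for every $v\in\mathcal{L}(X)$ with $|v|<N$; (2) the graph $G^L_n(X)$ is acyclic for the labeling for every $n\le N$; (3) the graph $G^R_n(X)$ is acyclic for the labeling for every $n\le N$.
   Context: $X\subseteq\mathcal{A}^{\mathbb{Z}}$ is a shift space over a finite alphabet $\mathcal{A}$ with language $\mathcal{L}(X)$, $\mathcal{L}_n(X)$ its words of length $n$. For $v\in\mathcal{L}(X)$, $E^L_X(v)=\{a:av\in\mathcal{L}(X)\}$, $E^R_X(v)=\{b:vb\in\mathcal{L}(X)\}$, and $\mathcal{E}_X(v)$ is the bipartite graph whose vertices are the disjoint union of $\{a^L:a\in E^L_X(v)\}$ and $\{b^R:b\in E^R_X(v)\}$, with an edge $\{a^L,b^R\}$ whenever $avb\in\mathcal{L}(X)$. $G^L_n(X)$ (resp. $G^R_n(X)$) is the multigraph with labeled edges whose vertex set is $\mathcal{A}$ and which has, for each $v\in\mathcal{L}_n(X)$ and each pair of distinct $a,b\in E^L_X(v)$ (resp. $a,b\in E^R_X(v)$), an undirected edge labeled $v$ between $a$ and $b$. A multigraph with labeled edges is acyclic for the labeling if every simple cycle in it uses only edges with the same label. *)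

theory Defs
  imports Main
begin

text \<open>A shift space is a shift-invariant subset (sigma(X) = X) that is closed in the
  product topology (discrete alphabet); closedness is written out via cylinders:
  x is in X iff every central block of x agrees with some point of X.\<close>

definition shift_space :: "(int \<Rightarrow> 'a::finite) set \<Rightarrow> bool" where
  "shift_space X \<longleftrightarrow>
     (\<forall>x. x \<in> X \<longleftrightarrow> (\<lambda>i. x (i + 1)) \<in> X) \<and>
     (\<forall>x. (\<forall>n::nat. \<exists>y\<in>X. \<forall>i. \<bar>i\<bar> \<le> int n \<longrightarrow> y i = x i) \<longrightarrow> x \<in> X)"

definition block :: "(int \<Rightarrow> 'a) \<Rightarrow> int \<Rightarrow> nat \<Rightarrow> 'a list" where
  "block x i n = map (\<lambda>k. x (i + int k)) [0..<n]"

definition language :: "(int \<Rightarrow> 'a) set \<Rightarrow> 'a list set" where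
  "language X = {w. \<exists>x\<in>X. \<exists>i. w = block x i (length w)}"

definition language_n :: "(int \<Rightarrow> 'a) set \<Rightarrow> nat \<Rightarrow> 'a list set" where
  "language_n X n = {w \<in> language X. length w = n}"

definition ext_left :: "(int \<Rightarrow> 'a) set \<Rightarrow> 'a list \<Rightarrow> 'a set" where
  "ext_left X v = {a. a # v \<in> language X}"

definition ext_right :: "(int \<Rightarrow> 'a) set \<Rightarrow> 'a list \<Rightarrow> 'a set" where
  "ext_right X v = {b. v @ [b] \<in> language X}"

text \<open>Multigraphs with labeled edges: a set of edges, each edge being a pair
  (label, set of its two endpoints). Two parallel edges are distinguished by
  their labels.\<close>

type_synonym ('l, 'v) lgraph = "('l \<times> 'v set) set"

definition simple_cycle :: "('l, 'v) lgraph \<Rightarrow> 'v list \<Rightarrow> 'l list \<Rightarrow> bool" where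
  "simple_cycle G vs ls \<longleftrightarrow>
     length vs \<ge> 2 \<and> length ls = length vs \<and> distinct vs \<and>
     (\<forall>i < length vs. (ls ! i, {vs ! i, vs ! ((i + 1) mod length vs)}) \<in> G) \<and>
     distinct (map (\<lambda>i. (ls ! i, {vs ! i, vs ! ((i + 1) mod length vs)})) [0..<length vs])"

definition acyclic_for_labeling :: "('l, 'v) lgraph \<Rightarrow> bool" where
  "acyclic_for_labeling G \<longleftrightarrow>
     (\<forall>vs ls. simple_cycle G vs ls \<longrightarrow> (\<forall>i < length ls. \<forall>j < length ls. ls ! i = ls ! j))"

definition acyclic_graph :: "(unit, 'v) lgraph \<Rightarrow> bool" where
  "acyclic_graph G \<longleftrightarrow> (\<forall>vs ls. \<not> simple_cycle G vs ls)"

text \<open>Extension graph E_X(v): bipartite, left copy Inl a for a in E^L(v),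
  right copy Inr b for b in E^R(v), edge {a^L, b^R} iff avb in L(X).\<close>
definition extension_graph :: "(int \<Rightarrow> 'a) set \<Rightarrow> 'a list \<Rightarrow> (unit, 'a + 'a) lgraph" where
  "extension_graph X v =
     {((), {Inl a, Inr b}) | a b. a \<in> ext_left X v \<and> b \<in> ext_right X v \<and>
                                 a # v @ [b] \<in> language X}"

definition GL :: "(int \<Rightarrow> 'a) set \<Rightarrow> nat \<Rightarrow> ('a list, 'a) lgraph" where
  "GL X n = {(v, {a, b}) | v a b. v \<in> language_n X n \<and>
                a \<in> ext_left X v \<and> b \<in> ext_left X v \<and> a \<noteq> b}"

definition GR :: "(int \<Rightarrow> 'a) set \<Rightarrow> nat \<Rightarrow> ('a list, 'a) lgraph" where
  "GR X n = {(v, {a, b}) | v a b. v \<in> language_n X n \<and>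
                a \<in> ext_right X v \<and> b \<in> ext_right X v \<and> a \<noteq> b}"

end

theory Submission
  imports Defs
begin

text \<open>A simple cycle of the bipartite extension graph of \<open>v\<close> amounts to an alternating cycle:
  distinct letters \<open>a\<^sub>i\<close>, \<open>b\<^sub>i\<close> (indices modulo \<open>k \<ge> 2\<close>) such that \<open>a\<^sub>i v b\<^sub>i\<close> and
  \<open>a\<^sub>i\<^sub>+\<^sub>1 v b\<^sub>i\<close> are words of \<open>X\<close>. Such a cycle gives the cycle \<open>a\<^sub>1, a\<^sub>2, \<dots>\<close> of
  \<open>GL X (length v + 1)\<close>, whose labels \<open>v b\<^sub>i\<close> are distinct.
  Conversely, let a simple cycle of \<open>GL X (n + 1)\<close> carry two different labels. If the labels do
  not share their prefix of length \<open>n\<close>, deleting last letters gives a cycle of \<open>GL X n\<close> with two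
  different labels; if all labels are of the form \<open>v b\<close> for one \<open>v\<close>, the cycle is a closed walk in
  the extension graph of \<open>v\<close> with distinct left vertices and at least two right vertices, and
  such a walk contains an alternating cycle. Induction on \<open>n\<close> gives (1) \<open>\<longleftrightarrow>\<close> (2).
  Reflecting every point of \<open>X\<close> exchanges left and right extensions and turns (2) into (3).
  Only the language of \<open>X\<close> matters.\<close>

section \<open>Words of a point set\<close>

lemma length_block [simp]: "length (block x i n) = n"
  by (simp add: block_def)

lemma nth_block [simp]: "k < n \<Longrightarrow> block x i n ! k = x (i + int k)"
  by (simp add: block_def)

lemma take_block: "m \<le> n \<Longrightarrow> take m (block x i n) = block x i m"
  by (simp add: block_def take_map)

lemma drop_block: "drop m (block x i n) = block x (i + int m) (n - m)"
  by (rule nth_equalityI) (simp_all add: algebra_simps)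

lemma language_appendD:
  assumes "u @ w \<in> language X" shows "u \<in> language X" "w \<in> language X"
proof -
  obtain x i where "x \<in> X" and uw: "u @ w = block x i (length u + length w)"
    using assms unfolding language_def by auto
  have "u = block x i (length u)"
    using arg_cong[OF uw, of "take (length u)"] by (simp add: take_block)
  moreover have "w = block x (i + int (length u)) (length w)"
    using arg_cong[OF uw, of "drop (length u)"] by (simp add: drop_block)
  ultimately show "u \<in> language X" "w \<in> language X"
    using \<open>x \<in> X\<close> unfolding language_def by blast+
qed

section \<open>The mirror image\<close>

definition mirror :: "(int \<Rightarrow> 'a) set \<Rightarrow> (int \<Rightarrow> 'a) set" where
  "mirror X = (\<lambda>x i. x (- i)) ` X"

lemma block_reflect: "block (\<lambda>i. x (- i)) i n = rev (block x (1 - i - int n) n)"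
proof (rule nth_equalityI)
  fix k assume "k < length (block (\<lambda>i. x (- i)) i n)"
  then have "k < n" by simp
  then have "1 - i - int n + int (n - Suc k) = - (i + int k)"
    by (simp add: of_nat_diff)
  with \<open>k < n\<close> show "block (\<lambda>i. x (- i)) i n ! k = rev (block x (1 - i - int n) n) ! k"
    by (simp add: rev_nth ac_simps)
qed simp

lemma language_mirror_iff: "w \<in> language (mirror X) \<longleftrightarrow> rev w \<in> language X"
proof
  assume "w \<in> language (mirror X)"
  then obtain x i where "x \<in> X" "w = block (\<lambda>i. x (- i)) i (length w)"
    unfolding language_def mirror_def by auto
  then have "rev w = block x (1 - i - int (length w)) (length w)"
    by (metis block_reflect rev_rev_ident)
  then show "rev w \<in> language X"
    using \<open>x \<in> X\<close> unfolding language_def by (intro CollectI bexI[of _ x]) auto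
next
  assume "rev w \<in> language X"
  then obtain x j where "x \<in> X" "rev w = block x j (length w)"
    unfolding language_def by auto
  then have "w = rev (block x j (length w))"
    by (metis rev_rev_ident)
  also have "\<dots> = block (\<lambda>i. x (- i)) (1 - j - int (length w)) (length w)"
    by (simp add: block_reflect)
  finally have "w = block (\<lambda>i. x (- i)) (1 - j - int (length w)) (length w)" .
  then show "w \<in> language (mirror X)"
    using \<open>x \<in> X\<close> unfolding language_def mirror_def by blast
qed

lemma ball_language_mirror: "(\<forall>v \<in> language (mirror X). P v) \<longleftrightarrow> (\<forall>w \<in> language X. P (rev w))"
  by (metis language_mirror_iff rev_rev_ident)

section \<open>Closed walks and alternating cycles\<close>

text \<open>The closed walk \<open>a\<^sub>0 b\<^sub>0 a\<^sub>1 b\<^sub>1 \<dots> a\<^sub>k\<^sub>-\<^sub>1 b\<^sub>k\<^sub>-\<^sub>1 a\<^sub>0\<close> with \<open>as = [a\<^sub>0, \<dots>]\<close>,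
  \<open>bs = [b\<^sub>0, \<dots>]\<close>, every \<open>b\<^sub>i\<close> related by \<open>R\<close> to both its neighbours.\<close>

definition closed_walk :: "('x \<Rightarrow> 'y \<Rightarrow> bool) \<Rightarrow> 'x list \<Rightarrow> 'y list \<Rightarrow> bool" where
  "closed_walk R as bs \<longleftrightarrow> list_all2 R as bs \<and> list_all2 R (rotate1 as) bs"

definition alt_cycle :: "('x \<Rightarrow> 'y \<Rightarrow> bool) \<Rightarrow> 'x list \<Rightarrow> 'y list \<Rightarrow> bool" where
  "alt_cycle R as bs \<longleftrightarrow> closed_walk R as bs \<and> distinct as \<and> distinct bs \<and> 2 \<le> length as"

lemma closed_walk_iff_nth:
  "closed_walk R as bs \<longleftrightarrow> length bs = length as \<and>
     (\<forall>i < length as. R (as ! i) (bs ! i) \<and> R (as ! ((i + 1) mod length as)) (bs ! i))"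
  by (auto simp: closed_walk_def list_all2_conv_all_nth nth_rotate1)

lemma closed_walk_rotate1:
  assumes "closed_walk R as bs" shows "closed_walk R (rotate1 as) (rotate1 bs)"
  using assms rel_funD[OF rotate1_transfer] unfolding closed_walk_def by blast

lemma closed_walk_rotate:
  "closed_walk R as bs \<Longrightarrow> closed_walk R (rotate n as) (rotate n bs)"
  by (induction n) (simp_all add: closed_walk_rotate1)

lemma list_all2_snoc_iff:
  "list_all2 R (xs @ [x]) ys \<longleftrightarrow> ys \<noteq> [] \<and> list_all2 R xs (butlast ys) \<and> R x (last ys)"
proof (cases ys rule: rev_cases)
  case (snoc ys' y)
  show ?thesis
  proof (cases "length xs = length ys'")
    case False
    then show ?thesis using snoc by (auto dest: list_all2_lengthD)
  qed (simp add: snoc list_all2_append)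
qed (auto dest: list_all2_lengthD)

lemma closed_walk_append_split:
  assumes walk: "closed_walk R (as1 @ as2) (bs1 @ bs2)" and len: "length as1 = length bs1"
    and "bs1 \<noteq> []" "bs2 \<noteq> []" and last_eq: "last bs1 = last bs2"
  shows "closed_walk R as1 bs1" "closed_walk R as2 bs2"
proof -
  have "as1 \<noteq> []" "as2 \<noteq> []"
    using assms by (auto simp: closed_walk_def dest: list_all2_lengthD)
  then have "rotate1 (as1 @ as2) = (tl as1 @ [hd as2]) @ (tl as2 @ [hd as1])"
    by (cases as1; cases as2) auto
  with walk have "list_all2 R ((tl as1 @ [hd as2]) @ (tl as2 @ [hd as1])) (bs1 @ bs2)"
    by (simp only: closed_walk_def)
  moreover have "length (tl as1 @ [hd as2]) = length bs1"
    using len \<open>as1 \<noteq> []\<close> by (cases as1) auto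
  ultimately have "list_all2 R (tl as1 @ [hd as2]) bs1" "list_all2 R (tl as2 @ [hd as1]) bs2"
    by (simp_all only: list_all2_append)
  moreover have "list_all2 R as1 bs1" "list_all2 R as2 bs2"
    using walk len by (simp_all add: closed_walk_def list_all2_append)
  ultimately show "closed_walk R as1 bs1" "closed_walk R as2 bs2"
    using \<open>as1 \<noteq> []\<close> \<open>as2 \<noteq> []\<close> last_eq
    by (simp_all add: closed_walk_def rotate1_hd_tl list_all2_snoc_iff)
qed

lemma closed_walk_split_at_repetition:
  assumes walk: "closed_walk R as bs" and "distinct as" "\<not> distinct bs"
  obtains as1 bs1 as2 bs2 y where "closed_walk R as1 bs1" "closed_walk R as2 bs2"
    "length as1 < length as" "length as2 < length as" "distinct as1" "distinct as2"
    "set bs = set bs1 \<union> set bs2" "y \<in> set bs1" "y \<in> set bs2"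
proof -
  have len: "length as = length bs"
    using walk by (auto simp: closed_walk_def dest: list_all2_lengthD)
  obtain xs ys zs y where bs: "bs = xs @ [y] @ ys @ [y] @ zs"
    using not_distinct_decomp[OF \<open>\<not> distinct bs\<close>] by blast
  define r where "r = length (xs @ [y] @ ys @ [y])"
  define bs1 where "bs1 = zs @ xs @ [y]"
  define bs2 where "bs2 = ys @ [y]"
  define as1 where "as1 = take (length bs1) (rotate r as)"
  define as2 where "as2 = drop (length bs1) (rotate r as)"
  have rot_bs: "rotate r bs = bs1 @ bs2"
    unfolding bs r_def bs1_def bs2_def by (metis rotate_append append_assoc)
  have "closed_walk R (as1 @ as2) (bs1 @ bs2)"
    using closed_walk_rotate[OF walk, of r] by (simp add: as1_def as2_def rot_bs)
  moreover have len1: "length as1 = length bs1" "length as2 = length bs2"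
    using len arg_cong[OF rot_bs, of length] by (simp_all add: as1_def as2_def)
  ultimately have "closed_walk R as1 bs1" "closed_walk R as2 bs2"
    using closed_walk_append_split[of R as1 as2 bs1 bs2] by (simp_all add: bs1_def bs2_def)
  moreover have "length as1 < length as" "length as2 < length as"
    using len bs len1 by (simp_all add: bs1_def bs2_def)
  moreover have "distinct as1" "distinct as2"
    using \<open>distinct as\<close> by (simp_all add: as1_def as2_def)
  moreover have "set bs = set bs1 \<union> set bs2"
    by (auto simp: bs bs1_def bs2_def)
  moreover have "y \<in> set bs1" "y \<in> set bs2"
    by (simp_all add: bs1_def bs2_def)
  ultimately show ?thesis
    using that by blast
qed

lemma closed_walk_imp_alt_cycle:
  assumes "closed_walk R as bs" "distinct as" "b \<in> set bs" "b' \<in> set bs" "b \<noteq> b'"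
  shows "\<exists>as' bs'. alt_cycle R as' bs'"
  using assms
proof (induction "length as" arbitrary: as bs b b' rule: less_induct)
  case less
  show ?case
  proof (cases "distinct bs")
    case True
    have "card {b, b'} \<le> card (set bs)"
      using less.prems(3,4) by (intro card_mono) auto
    moreover have "length as = length bs"
      using less.prems(1) by (auto simp: closed_walk_def dest: list_all2_lengthD)
    ultimately have "2 \<le> length as"
      using less.prems(5) card_length[of bs] by simp
    then show ?thesis
      using less.prems(1,2) True unfolding alt_cycle_def by blast
  next
    case False
    then obtain as1 bs1 as2 bs2 y where walks: "closed_walk R as1 bs1" "closed_walk R as2 bs2"
      and shorter: "length as1 < length as" "length as2 < length as"
      and distinct: "distinct as1" "distinct as2"
      and set_bs: "set bs = set bs1 \<union> set bs2" and y: "y \<in> set bs1" "y \<in> set bs2"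
      using closed_walk_split_at_repetition[OF less.prems(1,2)] by blast
    have "b \<noteq> y \<or> b' \<noteq> y"
      using less.prems(5) by blast
    then have "(\<exists>c\<in>set bs1. c \<noteq> y) \<or> (\<exists>c\<in>set bs2. c \<noteq> y)"
      using less.prems(3,4) set_bs by blast
    then show ?thesis
      using less.hyps[OF shorter(1) walks(1) distinct(1) y(1)]
        less.hyps[OF shorter(2) walks(2) distinct(2) y(2)] by blast
  qed
qed

lemma alt_cycle_conversep:
  assumes "alt_cycle R as bs" shows "alt_cycle R\<inverse>\<inverse> bs (rotate1 as)"
proof -
  have "list_all2 R as bs" "list_all2 R (rotate1 as) bs"
    using assms by (simp_all add: alt_cycle_def closed_walk_def)
  then have "list_all2 R\<inverse>\<inverse> bs (rotate1 as)" "list_all2 R\<inverse>\<inverse> (rotate1 bs) (rotate1 as)"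
    using rel_funD[OF rotate1_transfer] by (simp_all add: list.rel_flip)
  then show ?thesis
    using assms by (auto simp: alt_cycle_def closed_walk_def dest: list_all2_lengthD)
qed

lemma ex_alt_cycle_conversep_iff: "(\<exists>as bs. alt_cycle R\<inverse>\<inverse> as bs) \<longleftrightarrow> (\<exists>as bs. alt_cycle R as bs)"
  using alt_cycle_conversep[of R] alt_cycle_conversep[of "R\<inverse>\<inverse>"]
  unfolding conversep_conversep by blast

section \<open>Simple cycles\<close>

lemma mod_Suc_less: "i < (k::nat) \<Longrightarrow> (i + 1) mod k < k"
  by (rule mod_less_divisor) simp

lemma mod_Suc_ne:
  assumes "2 \<le> k" "i < (k::nat)" shows "(i + 1) mod k \<noteq> i"
proof
  assume "(i + 1) mod k = i"
  then have "k dvd (i + 1) - i"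
    using assms(2) mod_eq_dvd_iff_nat[of i "i + 1" k] by simp
  then show False using assms(1) by simp
qed

lemma cycle_edges_eq_imp_eq:
  assumes "distinct vs" "3 \<le> length vs" "i < length vs" "j < length vs"
    "{vs ! i, vs ! ((i + 1) mod length vs)} = {vs ! j, vs ! ((j + 1) mod length vs)}"
  shows "i = j"
proof (rule ccontr)
  let ?k = "length vs"
  assume "i \<noteq> j"
  then have "vs ! i \<noteq> vs ! j"
    using assms(1,3,4) by (simp add: nth_eq_iff_index_eq)
  with assms(5) have "vs ! i = vs ! ((j + 1) mod ?k)" "vs ! j = vs ! ((i + 1) mod ?k)"
    by (auto simp: doubleton_eq_iff)
  moreover have "(i + 1) mod ?k < ?k" "(j + 1) mod ?k < ?k"
    using mod_Suc_less assms(3,4) by blast+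
  ultimately have "i = (j + 1) mod ?k" "j = (i + 1) mod ?k"
    using assms(1,3,4) by (simp_all add: nth_eq_iff_index_eq)
  then have "(i + 2) mod ?k = i mod ?k"
    using assms(3) by (metis Suc_eq_plus1 add_2_eq_Suc' mod_Suc_eq mod_less)
  then have "?k dvd 2"
    using mod_eq_dvd_iff_nat[of i "i + 2" ?k] by simp
  then show False using assms(2) by (auto dest: dvd_imp_le)
qed

lemma simple_cycleI:
  assumes "2 \<le> length vs" "length ls = length vs" "distinct vs"
    and "\<And>i. i < length vs \<Longrightarrow> (ls ! i, {vs ! i, vs ! ((i + 1) mod length vs)}) \<in> G"
    and "3 \<le> length vs \<or> distinct ls"
  shows "simple_cycle G vs ls"
proof -
  have "inj_on (\<lambda>i. (ls ! i, {vs ! i, vs ! ((i + 1) mod length vs)})) {..<length vs}"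
    using assms(2,3,5) cycle_edges_eq_imp_eq[OF assms(3)]
    by (auto intro!: inj_onI simp: nth_eq_iff_index_eq)
  then show ?thesis
    using assms unfolding simple_cycle_def by (simp add: distinct_map atLeast0LessThan)
qed

lemma simple_cycle_edge:
  "simple_cycle G vs ls \<Longrightarrow> i < length ls \<Longrightarrow> (ls ! i, {vs ! i, vs ! ((i + 1) mod length vs)}) \<in> G"
  unfolding simple_cycle_def by auto

lemma not_acyclic_for_labeling_iff:
  "\<not> acyclic_for_labeling G \<longleftrightarrow>
     (\<exists>vs ls i j. simple_cycle G vs ls \<and> i < length ls \<and> j < length ls \<and> ls ! i \<noteq> ls ! j)"
  unfolding acyclic_for_labeling_def by blast

lemma not_acyclic_for_labeling_map:
  assumes cycle: "simple_cycle G vs ls" and map: "\<And>l e. (l, e) \<in> G \<Longrightarrow> (f l, e) \<in> G'"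
    and ij: "i < length ls" "j < length ls" "f (ls ! i) \<noteq> f (ls ! j)"
  shows "\<not> acyclic_for_labeling G'"
proof -
  have len: "2 \<le> length vs" "length ls = length vs" "distinct vs"
    using cycle by (simp_all add: simple_cycle_def)
  have "3 \<le> length vs \<or> distinct (map f ls)"
  proof (cases "length ls = 2")
    case True
    then obtain l l' where "ls = [l, l']"
      by (auto simp: numeral_2_eq_2 length_Suc_conv)
    then show ?thesis using ij by (auto simp: less_Suc_eq)
  qed (use len in simp)
  then have "simple_cycle G' vs (map f ls)"
    using len simple_cycle_edge[OF cycle] map by (intro simple_cycleI) simp_all
  then show ?thesis
    using ij unfolding not_acyclic_for_labeling_iff by (metis length_map nth_map)
qed

lemma acyclic_for_labeling_relabel:
  assumes "inj f" shows "acyclic_for_labeling (apfst f ` G) \<longleftrightarrow> acyclic_for_labeling G"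
proof
  assume acyclic: "acyclic_for_labeling (apfst f ` G)"
  show "acyclic_for_labeling G"
  proof (rule ccontr)
    assume "\<not> acyclic_for_labeling G"
    then obtain vs ls i j where cycle: "simple_cycle G vs ls"
      and ij: "i < length ls" "j < length ls" "ls ! i \<noteq> ls ! j"
      unfolding not_acyclic_for_labeling_iff by blast
    have "(f l, e) \<in> apfst f ` G" if "(l, e) \<in> G" for l e
      using that by force
    then show False
      using not_acyclic_for_labeling_map[OF cycle _ ij(1,2)] ij(3) assms acyclic
      by (metis injD)
  qed
next
  assume acyclic: "acyclic_for_labeling G"
  show "acyclic_for_labeling (apfst f ` G)"
  proof (rule ccontr)
    assume "\<not> acyclic_for_labeling (apfst f ` G)"
    then obtain vs ls i j where cycle: "simple_cycle (apfst f ` G) vs ls"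
      and ij: "i < length ls" "j < length ls" "ls ! i \<noteq> ls ! j"
      unfolding not_acyclic_for_labeling_iff by blast
    have "ls ! k \<in> range f" if "k < length ls" for k
      using simple_cycle_edge[OF cycle that] by force
    then have "inv f (ls ! i) \<noteq> inv f (ls ! j)"
      using ij by (metis f_inv_into_f)
    moreover have "(inv f l, e) \<in> G" if "(l, e) \<in> apfst f ` G" for l e
      using that assms by auto
    ultimately show False
      using not_acyclic_for_labeling_map[OF cycle _ ij(1,2)] acyclic by blast
  qed
qed

lemma alt_cycle_imp_not_acyclic_for_labeling:
  assumes cycle: "alt_cycle R as bs" and "inj f"
    and edge: "\<And>a a' b. R a b \<Longrightarrow> R a' b \<Longrightarrow> a \<noteq> a' \<Longrightarrow> (f b, {a, a'}) \<in> G"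
  shows "\<not> acyclic_for_labeling G"
proof -
  have walk: "length bs = length as"
    "\<And>i. i < length as \<Longrightarrow> R (as ! i) (bs ! i) \<and> R (as ! ((i + 1) mod length as)) (bs ! i)"
    and distinct: "distinct as" "distinct bs" and len: "2 \<le> length as"
    using cycle by (simp_all add: alt_cycle_def closed_walk_iff_nth)
  have "as ! i \<noteq> as ! ((i + 1) mod length as)" if "i < length as" for i
    using mod_Suc_ne[OF len that] mod_Suc_less[OF that] that distinct(1)
    by (simp add: nth_eq_iff_index_eq)
  then have simple: "simple_cycle G as (map f bs)"
    using walk distinct len edge
    by (intro simple_cycleI) (simp_all add: distinct_map inj_on_subset[OF \<open>inj f\<close>])
  have len_bs: "0 < length bs" "1 < length bs"
    using len walk(1) by linarith+
  then have "bs ! 0 \<noteq> bs ! 1"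
    using distinct(2) nth_eq_iff_index_eq[of bs 0 1] by simp
  then have "map f bs ! 0 \<noteq> map f bs ! 1"
    using len_bs \<open>inj f\<close> by (simp add: inj_eq)
  then show ?thesis
    using simple len_bs unfolding not_acyclic_for_labeling_iff by (metis length_map)
qed

lemma simple_cycle_length_2_imp_distinct:
  assumes "simple_cycle G vs ls" "length vs = 2" shows "distinct ls"
proof -
  have "[0..<length vs] = [0, 1]" "length ls = 2"
    using assms by (simp_all add: simple_cycle_def upt_rec)
  then show ?thesis
    using assms unfolding simple_cycle_def
    by (auto simp: insert_commute numeral_2_eq_2 length_Suc_conv)
qed

lemma simple_cycle_rotate1:
  assumes cycle: "simple_cycle G vs ls" shows "simple_cycle G (rotate1 vs) (rotate1 ls)"
proof (rule simple_cycleI)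
  let ?k = "length vs"
  have len: "2 \<le> ?k" "length ls = ?k"
    using cycle by (simp_all add: simple_cycle_def)
  show "2 \<le> length (rotate1 vs)" "length (rotate1 ls) = length (rotate1 vs)"
    using len by simp_all
  show "distinct (rotate1 vs)"
    using cycle by (simp add: simple_cycle_def)
  show "3 \<le> length (rotate1 vs) \<or> distinct (rotate1 ls)"
    using len simple_cycle_length_2_imp_distinct[OF cycle] by fastforce
  fix i assume "i < length (rotate1 vs)"
  then have i: "i < ?k" by simp
  define j where "j = (i + 1) mod ?k"
  have "j < ?k" "(i + 1) mod ?k = j"
    using mod_Suc_less[OF i] by (simp_all add: j_def)
  then show "(rotate1 ls ! i, {rotate1 vs ! i, rotate1 vs ! ((i + 1) mod length (rotate1 vs))}) \<in> G"
    using simple_cycle_edge[OF cycle, of j] i len by (simp add: nth_rotate1 j_def)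
qed

section \<open>Bipartite graphs\<close>

definition bipartite_graph :: "('x \<Rightarrow> 'y \<Rightarrow> bool) \<Rightarrow> (unit, 'x + 'y) lgraph" where
  "bipartite_graph R = {((), {Inl a, Inr b}) | a b. R a b}"

lemma bipartite_graph_iff: "(l, e) \<in> bipartite_graph R \<longleftrightarrow> (\<exists>a b. e = {Inl a, Inr b} \<and> R a b)"
  by (auto simp: bipartite_graph_def)

definition interleave :: "'x list \<Rightarrow> 'y list \<Rightarrow> ('x + 'y) list" where
  "interleave as bs =
     map (\<lambda>t. if even t then Inl (as ! (t div 2)) else Inr (bs ! (t div 2))) [0..<2 * length as]"

lemma length_interleave [simp]: "length (interleave as bs) = 2 * length as"
  by (simp add: interleave_def)

lemma nth_interleave:
  "t < 2 * length as \<Longrightarrow>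
     interleave as bs ! t = (if even t then Inl (as ! (t div 2)) else Inr (bs ! (t div 2)))"
  by (simp add: interleave_def)

lemma distinct_interleave:
  assumes "distinct as" "distinct bs" "length bs = length as"
  shows "distinct (interleave as bs)"
  unfolding distinct_conv_nth length_interleave
proof (intro allI impI)
  fix s t assume "s < 2 * length as" "t < 2 * length as" "s \<noteq> t"
  moreover have "s div 2 < length as" "t div 2 < length as"
    using calculation by auto
  ultimately show "interleave as bs ! s \<noteq> interleave as bs ! t"
    using assms by (auto simp: nth_interleave nth_eq_iff_index_eq) presburger+
qed

lemma alt_cycle_imp_not_acyclic_bipartite_graph:
  assumes "alt_cycle R as bs" shows "\<not> acyclic_graph (bipartite_graph R)"
proof -
  let ?m = "length as"
  have walk: "length bs = ?m" "\<And>j. j < ?m \<Longrightarrow> R (as ! j) (bs ! j) \<and> R (as ! ((j + 1) mod ?m)) (bs ! j)"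
    and distinct: "distinct as" "distinct bs" and len: "2 \<le> ?m"
    using assms by (simp_all add: alt_cycle_def closed_walk_iff_nth)
  let ?vs = "interleave as bs"
  have "((), {?vs ! t, ?vs ! ((t + 1) mod (2 * ?m))}) \<in> bipartite_graph R"
    if t: "t < 2 * ?m" for t
  proof (cases "even t")
    case True
    then have "(t + 1) mod (2 * ?m) = t + 1" "t + 1 < 2 * ?m" "t div 2 < ?m"
      using t by auto
    then show ?thesis
      using True t walk(2)[of "t div 2"] by (auto simp: nth_interleave bipartite_graph_def)
  next
    case False
    then have "t + 1 = 2 * (t div 2 + 1)"
      by presburger
    then have "(t + 1) mod (2 * ?m) = 2 * ((t div 2 + 1) mod ?m)"
      by (simp only: mod_mult_mult1)
    moreover have "t div 2 < ?m"
      using t by auto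
    moreover have "2 * ((t div 2 + 1) mod ?m) < 2 * ?m"
      using mod_Suc_less[OF \<open>t div 2 < ?m\<close>] by simp
    ultimately show ?thesis
      using False t walk(2)[of "t div 2"]
      by (auto simp: nth_interleave bipartite_graph_def insert_commute)
  qed
  then have "simple_cycle (bipartite_graph R) ?vs (replicate (2 * ?m) ())"
    using len distinct_interleave[OF distinct walk(1)] by (intro simple_cycleI) simp_all
  then show ?thesis
    unfolding acyclic_graph_def by blast
qed

lemma bipartite_cycle_edge:
  assumes "simple_cycle (bipartite_graph R) vs ls" "i < length vs"
  obtains a b where "R a b"
    "vs ! i = Inl a \<and> vs ! ((i + 1) mod length vs) = Inr b \<or>
     vs ! i = Inr b \<and> vs ! ((i + 1) mod length vs) = Inl a"
  using simple_cycle_edge[OF assms(1), of i] assms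
  by (auto simp: simple_cycle_def bipartite_graph_iff doubleton_eq_iff)

lemma bipartite_cycle_alternates:
  assumes "simple_cycle (bipartite_graph R) vs ls" "i < length vs"
  shows "isl (vs ! ((i + 1) mod length vs)) \<longleftrightarrow> \<not> isl (vs ! i)"
  by (rule bipartite_cycle_edge[OF assms]) auto

lemma bipartite_cycle_isl_iff_even:
  assumes cycle: "simple_cycle (bipartite_graph R) vs ls" and "isl (vs ! 0)" "i < length vs"
  shows "isl (vs ! i) \<longleftrightarrow> even i"
  using \<open>i < length vs\<close>
proof (induction i)
  case (Suc i)
  then have "(i + 1) mod length vs = Suc i"
    by simp
  with bipartite_cycle_alternates[OF cycle, of i] Suc show ?case
    by simp
qed (use assms in simp)

lemma bipartite_cycle_even_length:
  assumes cycle: "simple_cycle (bipartite_graph R) vs ls" and "isl (vs ! 0)"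
  shows "even (length vs)"
proof -
  define i where "i = length vs - 1"
  have "2 \<le> length vs"
    using cycle by (simp add: simple_cycle_def)
  then have "i < length vs" "length vs = i + 1"
    by (simp_all add: i_def)
  then show ?thesis
    using bipartite_cycle_alternates[OF cycle \<open>i < length vs\<close>] assms(2)
      bipartite_cycle_isl_iff_even[OF assms \<open>i < length vs\<close>]
    by simp
qed

lemma bipartite_cycle_from_Inl_decompose:
  assumes cycle: "simple_cycle (bipartite_graph R) vs ls" and "isl (vs ! 0)"
  obtains as bs where "length vs = 2 * length as" "length bs = length as" "2 \<le> length as"
    "distinct as" "distinct bs"
    "\<And>j. j < length as \<Longrightarrow> vs ! (2 * j) = Inl (as ! j) \<and> vs ! (2 * j + 1) = Inr (bs ! j)"
proof -
  have "length vs \<noteq> 2"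
    using simple_cycle_length_2_imp_distinct[OF cycle] cycle
    by (auto simp: simple_cycle_def numeral_2_eq_2 length_Suc_conv)
  moreover have "2 \<le> length vs" "distinct vs"
    using cycle by (simp_all add: simple_cycle_def)
  moreover obtain m where k: "length vs = 2 * m"
    using bipartite_cycle_even_length[OF assms] by blast
  ultimately have "2 \<le> m"
    by simp
  define as where "as = map (\<lambda>j. projl (vs ! (2 * j))) [0..<m]"
  define bs where "bs = map (\<lambda>j. projr (vs ! (2 * j + 1))) [0..<m]"
  have len: "length as = m" "length bs = m"
    by (simp_all add: as_def bs_def)
  have vs_even: "vs ! (2 * j) = Inl (as ! j)" and vs_odd: "vs ! (2 * j + 1) = Inr (bs ! j)"
    if "j < m" for j
    using bipartite_cycle_isl_iff_even[OF assms, of "2 * j"]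
      bipartite_cycle_isl_iff_even[OF assms, of "2 * j + 1"] that k
    by (auto simp: as_def bs_def)
  have "distinct as"
    unfolding distinct_conv_nth len
  proof (intro allI impI)
    fix i j assume "i < m" "j < m" "i \<noteq> j"
    then have "vs ! (2 * i) \<noteq> vs ! (2 * j)"
      using \<open>distinct vs\<close> k nth_eq_iff_index_eq[of vs "2 * i" "2 * j"] by simp
    then show "as ! i \<noteq> as ! j"
      using vs_even \<open>i < m\<close> \<open>j < m\<close> by metis
  qed
  moreover have "distinct bs"
    unfolding distinct_conv_nth len
  proof (intro allI impI)
    fix i j assume "i < m" "j < m" "i \<noteq> j"
    then have "vs ! (2 * i + 1) \<noteq> vs ! (2 * j + 1)"
      using \<open>distinct vs\<close> k nth_eq_iff_index_eq[of vs "2 * i + 1" "2 * j + 1"] by simp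
    then show "bs ! i \<noteq> bs ! j"
      using vs_odd \<open>i < m\<close> \<open>j < m\<close> by metis
  qed
  ultimately show ?thesis
    using k \<open>2 \<le> m\<close> len vs_even vs_odd by (intro that[of as bs]) simp_all
qed

lemma bipartite_cycle_from_Inl_imp_alt_cycle:
  assumes cycle: "simple_cycle (bipartite_graph R) vs ls" and "isl (vs ! 0)"
  shows "\<exists>as bs. alt_cycle R as bs"
proof -
  obtain as bs where k: "length vs = 2 * length as" and len: "length bs = length as"
    and cycle_props: "2 \<le> length as" "distinct as" "distinct bs"
    and vs: "\<And>j. j < length as \<Longrightarrow> vs ! (2 * j) = Inl (as ! j) \<and> vs ! (2 * j + 1) = Inr (bs ! j)"
    using bipartite_cycle_from_Inl_decompose[OF assms] by blast
  let ?m = "length as"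
  have "closed_walk R as bs"
    unfolding closed_walk_iff_nth
  proof (intro conjI allI impI len)
    fix j assume "j < ?m"
    then have j: "2 * j < length vs" "2 * j + 1 < length vs" "(j + 1) mod ?m < ?m"
      using k mod_Suc_less[of j ?m] by simp_all
    have next_index: "(2 * j + 1) mod length vs = 2 * j + 1"
      "(2 * j + 1 + 1) mod length vs = 2 * ((j + 1) mod ?m)"
      using j k by (simp_all add: mod_mult_mult1[symmetric])
    obtain a b where "R a b" "vs ! (2 * j) = Inl a \<and> vs ! ((2 * j + 1) mod length vs) = Inr b \<or>
        vs ! (2 * j) = Inr b \<and> vs ! ((2 * j + 1) mod length vs) = Inl a"
      by (rule bipartite_cycle_edge[OF cycle j(1)])
    then show "R (as ! j) (bs ! j)"
      using vs[OF \<open>j < ?m\<close>] next_index by auto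
    obtain a' b' where "R a' b'"
      "vs ! (2 * j + 1) = Inl a' \<and> vs ! ((2 * j + 1 + 1) mod length vs) = Inr b' \<or>
       vs ! (2 * j + 1) = Inr b' \<and> vs ! ((2 * j + 1 + 1) mod length vs) = Inl a'"
      by (rule bipartite_cycle_edge[OF cycle j(2)])
    then show "R (as ! ((j + 1) mod ?m)) (bs ! j)"
      using vs[OF \<open>j < ?m\<close>] vs[OF j(3)] next_index by auto
  qed
  then show ?thesis
    using cycle_props unfolding alt_cycle_def by blast
qed

lemma bipartite_cycle_imp_alt_cycle:
  assumes cycle: "simple_cycle (bipartite_graph R) vs ls"
  shows "\<exists>as bs. alt_cycle R as bs"
proof (cases "isl (vs ! 0)")
  case True
  then show ?thesis
    using bipartite_cycle_from_Inl_imp_alt_cycle[OF cycle] by blast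
next
  case False
  have "0 < length vs"
    using cycle by (auto simp: simple_cycle_def)
  then have "rotate1 vs ! 0 = vs ! ((0 + 1) mod length vs)"
    using nth_rotate1[of 0 vs] by simp
  then have "isl (rotate1 vs ! 0)"
    using bipartite_cycle_alternates[OF cycle \<open>0 < length vs\<close>] False by simp
  then show ?thesis
    using bipartite_cycle_from_Inl_imp_alt_cycle[OF simple_cycle_rotate1[OF cycle]] by blast
qed

lemma acyclic_bipartite_graph_iff:
  "acyclic_graph (bipartite_graph R) \<longleftrightarrow> \<not> (\<exists>as bs. alt_cycle R as bs)"
  using bipartite_cycle_imp_alt_cycle alt_cycle_imp_not_acyclic_bipartite_graph
  unfolding acyclic_graph_def by blast

lemma extension_graph_eq_bipartite_graph:
  "extension_graph X v = bipartite_graph (\<lambda>a b. a # v @ [b] \<in> language X)"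
proof -
  have "a # v \<in> language X" "v @ [b] \<in> language X" if "a # v @ [b] \<in> language X" for a b
    using language_appendD[of "a # v" "[b]"] language_appendD[of "[a]" "v @ [b]"] that by simp_all
  then show ?thesis
    unfolding extension_graph_def bipartite_graph_def ext_left_def ext_right_def by blast
qed

lemma acyclic_extension_graph_iff:
  "acyclic_graph (extension_graph X v) \<longleftrightarrow>
     \<not> (\<exists>as bs. alt_cycle (\<lambda>a b. a # v @ [b] \<in> language X) as bs)"
  by (simp add: extension_graph_eq_bipartite_graph acyclic_bipartite_graph_iff)

lemma acyclic_extension_graph_mirror:
  "acyclic_graph (extension_graph (mirror X) v) \<longleftrightarrow> acyclic_graph (extension_graph X (rev v))"
proof -
  have "(\<lambda>a b. a # v @ [b] \<in> language (mirror X)) = (\<lambda>b a. b # rev v @ [a] \<in> language X)\<inverse>\<inverse>"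
    by (simp add: fun_eq_iff language_mirror_iff)
  then show ?thesis
    by (simp add: acyclic_extension_graph_iff ex_alt_cycle_conversep_iff)
qed

section \<open>The graphs of left extensions\<close>

lemma GL_edgeD:
  "(l, {a, b}) \<in> GL X n \<Longrightarrow> l \<in> language_n X n \<and> a # l \<in> language X \<and> b # l \<in> language X"
  unfolding GL_def ext_left_def by (auto simp: doubleton_eq_iff)

lemma acyclic_GL_0: "acyclic_for_labeling (GL X 0)"
  unfolding acyclic_for_labeling_def
proof (intro allI impI)
  fix vs ls i j assume cycle: "simple_cycle (GL X 0) vs ls" and ij: "i < length ls" "j < length ls"
  then have "ls ! i \<in> language_n X 0" "ls ! j \<in> language_n X 0"
    using GL_edgeD[OF simple_cycle_edge[OF cycle ij(1)]] GL_edgeD[OF simple_cycle_edge[OF cycle ij(2)]]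
    by simp_all
  then show "ls ! i = ls ! j"
    by (simp add: language_n_def)
qed

lemma butlast_in_language_n:
  assumes "w \<in> language_n X (Suc n)" shows "butlast w \<in> language_n X n"
proof -
  have "w \<noteq> []"
    using assms by (auto simp: language_n_def)
  then have "w = butlast w @ [last w]"
    by simp
  then show ?thesis
    using assms language_appendD(1)[of "butlast w" "[last w]"] by (simp add: language_n_def)
qed

lemma GL_Suc_butlast:
  assumes "(l, e) \<in> GL X (Suc n)" shows "(butlast l, e) \<in> GL X n"
proof -
  obtain a b where e: "e = {a, b}" "a \<noteq> b" and l: "l \<in> language_n X (Suc n)"
    and ab: "a # l \<in> language X" "b # l \<in> language X"
    using assms unfolding GL_def ext_left_def by blast
  moreover have "l \<noteq> []"
    using l by (auto simp: language_n_def)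
  then have "l = butlast l @ [last l]"
    by simp
  then have "a # butlast l \<in> language X" "b # butlast l \<in> language X"
    using ab language_appendD(1)[of "a # butlast l" "[last l]"]
      language_appendD(1)[of "b # butlast l" "[last l]"]
    by simp_all
  moreover have "butlast l \<in> language_n X n"
    using butlast_in_language_n[OF l] .
  ultimately show ?thesis
    unfolding GL_def ext_left_def by auto
qed

lemma GL_cycle_closed_walk:
  assumes cycle: "simple_cycle (GL X (Suc n)) vs ls"
    and prefix: "\<And>t. t < length ls \<Longrightarrow> butlast (ls ! t) = v"
  shows "closed_walk (\<lambda>a b. a # v @ [b] \<in> language X) vs (map last ls)"
  unfolding closed_walk_iff_nth
proof (intro conjI allI impI)
  have len: "length ls = length vs"
    using cycle by (simp add: simple_cycle_def)
  then show "length (map last ls) = length vs"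
    by simp
  fix t assume "t < length vs"
  then have "ls ! t \<in> language_n X (Suc n)" "vs ! t # ls ! t \<in> language X"
    "vs ! ((t + 1) mod length vs) # ls ! t \<in> language X"
    using GL_edgeD[OF simple_cycle_edge[OF cycle]] len by auto
  moreover have "ls ! t \<noteq> []"
    using calculation(1) by (auto simp: language_n_def)
  then have "ls ! t = v @ [map last ls ! t]"
    using prefix[of t] \<open>t < length vs\<close> len append_butlast_last_id[of "ls ! t"] by simp
  ultimately show "vs ! t # v @ [map last ls ! t] \<in> language X"
    "vs ! ((t + 1) mod length vs) # v @ [map last ls ! t] \<in> language X"
    by simp_all
qed

lemma GL_cycle_common_prefix_imp_not_acyclic:
  assumes cycle: "simple_cycle (GL X (Suc n)) vs ls"
    and prefix: "\<And>t. t < length ls \<Longrightarrow> butlast (ls ! t) = v"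
    and ij: "i < length ls" "j < length ls" "ls ! i \<noteq> ls ! j"
  shows "\<not> acyclic_graph (extension_graph X v)"
proof -
  have split: "ls ! t = v @ [last (ls ! t)]" if "t < length ls" for t
  proof -
    have "ls ! t \<noteq> []"
      using GL_edgeD[OF simple_cycle_edge[OF cycle that]] by (auto simp: language_n_def)
    then show ?thesis
      using prefix[OF that] append_butlast_last_id[of "ls ! t"] by simp
  qed
  have "closed_walk (\<lambda>a b. a # v @ [b] \<in> language X) vs (map last ls)"
    using GL_cycle_closed_walk[OF cycle prefix] .
  moreover have "distinct vs"
    using cycle by (simp add: simple_cycle_def)
  moreover have "last (ls ! i) \<noteq> last (ls ! j)"
    using ij split[OF ij(1)] split[OF ij(2)] by auto
  ultimately show ?thesis
    using closed_walk_imp_alt_cycle[of _ vs "map last ls" "last (ls ! i)" "last (ls ! j)"] ij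
    by (simp add: acyclic_extension_graph_iff)
qed

lemma acyclic_GL_Suc:
  assumes acyclic_n: "acyclic_for_labeling (GL X n)"
    and acyclic_ext: "\<And>v. v \<in> language_n X n \<Longrightarrow> acyclic_graph (extension_graph X v)"
  shows "acyclic_for_labeling (GL X (Suc n))"
proof (rule ccontr)
  assume "\<not> acyclic_for_labeling (GL X (Suc n))"
  then obtain vs ls i j where cycle: "simple_cycle (GL X (Suc n)) vs ls"
    and ij: "i < length ls" "j < length ls" "ls ! i \<noteq> ls ! j"
    unfolding not_acyclic_for_labeling_iff by blast
  have "0 < length ls"
    using ij by linarith
  show False
  proof (cases "\<forall>t < length ls. butlast (ls ! t) = butlast (ls ! 0)")
    case False
    then obtain t where "t < length ls" "butlast (ls ! t) \<noteq> butlast (ls ! 0)"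
      by blast
    then show False
      using not_acyclic_for_labeling_map[where f = butlast and G' = "GL X n", OF cycle GL_Suc_butlast]
        \<open>0 < length ls\<close> acyclic_n by blast
  next
    case True
    have "butlast (ls ! 0) \<in> language_n X n"
      using GL_edgeD[OF simple_cycle_edge[OF cycle \<open>0 < length ls\<close>]] butlast_in_language_n by blast
    then show False
      using GL_cycle_common_prefix_imp_not_acyclic[OF cycle _ ij] True acyclic_ext by blast
  qed
qed

lemma not_acyclic_GL_Suc_length:
  assumes "\<not> acyclic_graph (extension_graph X v)"
  shows "\<not> acyclic_for_labeling (GL X (Suc (length v)))"
proof -
  obtain as bs where cycle: "alt_cycle (\<lambda>a b. a # v @ [b] \<in> language X) as bs"
    using assms by (auto simp: acyclic_extension_graph_iff)
  show ?thesis
  proof (rule alt_cycle_imp_not_acyclic_for_labeling[OF cycle, of "\<lambda>b. v @ [b]"])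
    show "inj (\<lambda>b. v @ [b])"
      by (rule injI) simp
    fix a a' b assume "a # v @ [b] \<in> language X" "a' # v @ [b] \<in> language X" "a \<noteq> a'"
    moreover have "v @ [b] \<in> language X"
      using language_appendD(2)[of "[a]" "v @ [b]"] calculation(1) by simp
    ultimately show "(v @ [b], {a, a'}) \<in> GL X (Suc (length v))"
      unfolding GL_def language_n_def ext_left_def by auto
  qed
qed

lemma acyclic_extension_graphs_iff_acyclic_GL:
  "(\<forall>v \<in> language X. length v < N \<longrightarrow> acyclic_graph (extension_graph X v)) \<longleftrightarrow>
     (\<forall>n \<le> N. acyclic_for_labeling (GL X n))"
proof
  assume acyclic_ext: "\<forall>v \<in> language X. length v < N \<longrightarrow> acyclic_graph (extension_graph X v)"
  show "\<forall>n \<le> N. acyclic_for_labeling (GL X n)"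
  proof (intro allI impI)
    fix n assume "n \<le> N"
    then show "acyclic_for_labeling (GL X n)"
    proof (induction n)
      case (Suc n)
      then show ?case
        using acyclic_ext by (intro acyclic_GL_Suc) (auto simp: language_n_def)
    qed (rule acyclic_GL_0)
  qed
next
  assume "\<forall>n \<le> N. acyclic_for_labeling (GL X n)"
  then show "\<forall>v \<in> language X. length v < N \<longrightarrow> acyclic_graph (extension_graph X v)"
    using not_acyclic_GL_Suc_length by (metis Suc_leI)
qed

lemma GL_mirror: "GL (mirror X) n = apfst rev ` GR X n"
proof -
  have ext: "ext_left (mirror X) v = ext_right X (rev v)"
    and lang: "v \<in> language_n (mirror X) n \<longleftrightarrow> rev v \<in> language_n X n" for v
    by (simp_all add: ext_left_def ext_right_def language_n_def language_mirror_iff)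
  have GL: "(l, e) \<in> GL (mirror X) n \<longleftrightarrow> (rev l, e) \<in> GR X n" for l e
    unfolding GL_def GR_def ext lang by auto
  have image: "(l, e) \<in> apfst rev ` G \<longleftrightarrow> (rev l, e) \<in> G" for l e and G :: "('a list \<times> 'a set) set"
  proof
    assume "(rev l, e) \<in> G"
    then show "(l, e) \<in> apfst rev ` G" by (rule rev_image_eqI) simp
  qed auto
  show ?thesis
  proof (rule set_eqI)
    fix p show "p \<in> GL (mirror X) n \<longleftrightarrow> p \<in> apfst rev ` GR X n"
      by (cases p) (simp only: GL image)
  qed
qed

theorem mainTheorem5:
  fixes X :: "(int \<Rightarrow> 'a::finite) set" and N :: nat
  assumes "shift_space X"
  shows "((\<forall>v \<in> language X. length v < N \<longrightarrow> acyclic_graph (extension_graph X v))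
            \<longleftrightarrow> (\<forall>n \<le> N. acyclic_for_labeling (GL X n)))
       \<and> ((\<forall>n \<le> N. acyclic_for_labeling (GL X n))
            \<longleftrightarrow> (\<forall>n \<le> N. acyclic_for_labeling (GR X n)))"
proof -
  have "(\<forall>v \<in> language (mirror X). length v < N \<longrightarrow> acyclic_graph (extension_graph (mirror X) v))
    \<longleftrightarrow> (\<forall>v \<in> language X. length v < N \<longrightarrow> acyclic_graph (extension_graph X v))"
    by (simp add: acyclic_extension_graph_mirror ball_language_mirror)
  moreover have "acyclic_for_labeling (GL (mirror X) n) \<longleftrightarrow> acyclic_for_labeling (GR X n)" for n
    by (simp add: GL_mirror acyclic_for_labeling_relabel)
  ultimately show ?thesis
    using acyclic_extension_graphs_iff_acyclic_GL[of X N]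
      acyclic_extension_graphs_iff_acyclic_GL[of "mirror X" N]
    by simp
qed

end
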